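(* Let $h=\prod_{i=1}^{t}p_i^{s_i}$ with distinct primes $p_i$ and $s_i\ge1$, $m\le n$, and let $A=SDT\in\mathbb{Z}_h^{m\times n}$ where $S\in GL_m(\mathbb{Z}_h)$, $T\in GL_n(\mathbb{Z}_h)$ and $D=\mathrm{diag}(\prod_{i=1}^tp_i^{\alpha_{i1}},\ldots,\prod_{i=1}^tp_i^{\alpha_{im}})$ with $0\leq\alpha_{i1}\leq\cdots\leq\alpha_{im}\leq s_i$ for all $i$. Then the inner rank of $A$ equals $\max\{c\in\{1,\dots,m\}: (\alpha_{1c},\alpha_{2c},\ldots,\alpha_{tc})\neq(s_1,s_2,\ldots,s_t)\}$ (interpreted as $0$ if this set is empty).
   Context: For a commutative ring $R$ and nonzero $A\in R^{m\times n}$, the inner rank $\rho(A)$ is the least integer $r$ such that $A=BC$ with $B\in R^{m\times r}$, $C\in R^{r\times n}$; $\rho(0)=0$. $\mathrm{diag}(d_1,\ldots,d_m)$ for $m\le n$ denotes the $m\times n$ matrix with $d_1,\dots,d_m$ on the main diagonal and zeros elsewhere. *)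

theory Defs
  imports "Jordan_Normal_Form.Matrix" "Berlekamp_Zassenhaus.Finite_Field"
begin

text \<open>Inner rank over a commutative ring: least r with A = B C, B of size m x r,
  C of size r x n. For the zero matrix this is 0 (r = 0 gives the zero product).\<close>
definition inner_rank :: "'a::comm_ring_1 mat \<Rightarrow> nat" where
  "inner_rank A = (LEAST r. \<exists>B C. B \<in> carrier_mat (dim_row A) r \<and>
      C \<in> carrier_mat r (dim_col A) \<and> A = B * C)"

text \<open>diag(d_1,...,d_m) as an m x n matrix (0-based indices: entry (k,k) is d k).\<close>
definition diag_rect :: "nat \<Rightarrow> nat \<Rightarrow> (nat \<Rightarrow> 'a::zero) \<Rightarrow> 'a mat" where
  "diag_rect m n d = mat m n (\<lambda>(i,j). if i = j then d i else 0)"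

end

theory Submission
  imports Defs "Jordan_Normal_Form.Determinant"
begin

text \<open>Invertible factors do not change the inner rank, so it suffices to treat the diagonal
  matrix \<open>D\<close> with entries \<open>d\<^sub>c = \<Prod>\<^sub>i p\<^sub>i ^ \<alpha>\<^sub>i\<^sub>c\<close>. These form a divisor chain
  \<open>d\<^sub>1 | \<dots> | d\<^sub>m | h\<close>, and \<open>d\<^sub>c = 0\<close> in \<open>\<int>\<^sub>h\<close> exactly when \<open>\<alpha>\<^sub>\<cdot>\<^sub>c = s\<close>. Hence, with \<open>r\<close> the
  last index where \<open>d\<^sub>r \<noteq> h\<close>, \<open>D\<close> factors through \<open>r\<close> columns. Conversely, a factorisation
  \<open>D = B C\<close> with \<open>k < r\<close> inner columns yields, after scaling row \<open>i\<close> of the leading \<open>r \<times> r\<close>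
  block by \<open>d\<^sub>r / d\<^sub>i\<close>, a factorisation \<open>d\<^sub>r I\<^sub>r = B' C'\<close> over \<open>\<int>\<^sub>h\<close>. Lifting \<open>B'\<close> and \<open>C'\<close>
  to integer matrices, their product \<open>X\<close> has determinant \<open>0\<close> (it factors through \<open>k < r\<close>
  columns), yet \<open>X = d\<^sub>r M\<close> with \<open>M \<equiv> I\<^sub>r\<close> modulo \<open>h / d\<^sub>r > 1\<close>, so \<open>det M \<equiv> 1\<close>.\<close>

lemma inner_rank_le:
  fixes A :: "'a::comm_ring_1 mat"
  assumes "B \<in> carrier_mat (dim_row A) r" "C \<in> carrier_mat r (dim_col A)" "A = B * C"
  shows "inner_rank A \<le> r"
  unfolding inner_rank_def using assms by (intro Least_le) blast

lemma inner_rank_factorization: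
  fixes A :: "'a::comm_ring_1 mat"
  obtains B C where "B \<in> carrier_mat (dim_row A) (inner_rank A)"
    "C \<in> carrier_mat (inner_rank A) (dim_col A)" "A = B * C"
proof -
  have "\<exists>r B C. B \<in> carrier_mat (dim_row A) r \<and> C \<in> carrier_mat r (dim_col A) \<and> A = B * C"
    by (intro exI[of _ "dim_col A"] exI[of _ A] exI[of _ "1\<^sub>m (dim_col A)"]) auto
  from LeastI_ex[OF this] show ?thesis
    using that unfolding inner_rank_def by blast
qed

lemma inner_rank_mult_left_le:
  fixes A :: "'a::comm_ring_1 mat"
  assumes S: "S \<in> carrier_mat m (dim_row A)"
  shows "inner_rank (S * A) \<le> inner_rank A"
proof -
  obtain B C where B: "B \<in> carrier_mat (dim_row A) (inner_rank A)"
    and C: "C \<in> carrier_mat (inner_rank A) (dim_col A)" and A: "A = B * C"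
    by (rule inner_rank_factorization)
  have "S * A = (S * B) * C"
    unfolding A using assoc_mult_mat[OF S B C] by simp
  then show ?thesis
    using S B C by (intro inner_rank_le[of "S * B" _ _ C]) auto
qed

lemma inner_rank_mult_right_le:
  fixes A :: "'a::comm_ring_1 mat"
  assumes T: "T \<in> carrier_mat (dim_col A) n"
  shows "inner_rank (A * T) \<le> inner_rank A"
proof -
  obtain B C where B: "B \<in> carrier_mat (dim_row A) (inner_rank A)"
    and C: "C \<in> carrier_mat (inner_rank A) (dim_col A)" and A: "A = B * C"
    by (rule inner_rank_factorization)
  have "A * T = B * (C * T)"
    unfolding A using assoc_mult_mat[OF B C T] by simp
  then show ?thesis
    using T B C by (intro inner_rank_le[of B _ _ "C * T"]) auto
qed

lemma invertible_mat_obtain_inverse: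
  fixes S :: "'a::semiring_1 mat"
  assumes "S \<in> carrier_mat n n" "invertible_mat S"
  obtains S' where "S' \<in> carrier_mat n n" "S * S' = 1\<^sub>m n" "S' * S = 1\<^sub>m n"
proof -
  from assms obtain S' where SS': "S * S' = 1\<^sub>m n" and S'S: "S' * S = 1\<^sub>m (dim_row S')"
    unfolding invertible_mat_def inverts_mat_def by auto
  have "S' \<in> carrier_mat n n"
    using arg_cong[OF SS', of dim_col] arg_cong[OF S'S, of dim_col] assms(1) by auto
  with SS' S'S show ?thesis
    using that by auto
qed

lemma inner_rank_invertible_mult:
  fixes D :: "'a::comm_ring_1 mat"
  assumes S: "S \<in> carrier_mat m m" "invertible_mat S"
    and T: "T \<in> carrier_mat n n" "invertible_mat T"
    and D: "D \<in> carrier_mat m n"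
  shows "inner_rank (S * D * T) = inner_rank D"
proof (rule antisym)
  show "inner_rank (S * D * T) \<le> inner_rank D"
    using inner_rank_mult_right_le[of T "S * D"] inner_rank_mult_left_le[of S m D] S T D
    by fastforce
  obtain S' where S': "S' \<in> carrier_mat m m" "S' * S = 1\<^sub>m m"
    using S by (rule invertible_mat_obtain_inverse)
  obtain T' where T': "T' \<in> carrier_mat n n" "T * T' = 1\<^sub>m n"
    using T by (rule invertible_mat_obtain_inverse)
  have SD: "S * D \<in> carrier_mat m n"
    using S D by simp
  have "S * D * T * T' = S * D"
    using assoc_mult_mat[OF SD T(1) T'(1)] T'(2) right_mult_one_mat[OF SD] by simp
  moreover have "S' * (S * D) = D"
    using assoc_mult_mat[OF S'(1) S(1) D, symmetric] S' D by simp
  ultimately have "D = S' * (S * D * T) * T'"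
    using assoc_mult_mat[of S' m m "S * D * T" n T' n] S' T' SD T by simp
  also have "inner_rank \<dots> \<le> inner_rank (S * D * T)"
    using inner_rank_mult_right_le[of T' "S' * (S * D * T)"]
      inner_rank_mult_left_le[of S' m "S * D * T"] S S' T T' D
    by fastforce
  finally show "inner_rank D \<le> inner_rank (S * D * T)" .
qed

lemma inner_rank_diag_rect_le:
  fixes d :: "nat \<Rightarrow> 'a::comm_ring_1"
  assumes zero: "\<And>i. r \<le> i \<Longrightarrow> i < m \<Longrightarrow> d i = 0"
  shows "inner_rank (diag_rect m n d) \<le> r"
proof (rule inner_rank_le)
  define P where "P = (mat m r (\<lambda>(i, j). if i = j then 1 else 0) :: 'a mat)"
  define Q where "Q = mat r n (\<lambda>(i, j). if i = j then d i else 0)"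
  show "P \<in> carrier_mat (dim_row (diag_rect m n d)) r" "Q \<in> carrier_mat r (dim_col (diag_rect m n d))"
    unfolding P_def Q_def diag_rect_def by auto
  show "diag_rect m n d = P * Q"
  proof (rule eq_matI)
    fix i j assume "i < dim_row (P * Q)" "j < dim_col (P * Q)"
    then have ij: "i < m" "j < n"
      unfolding P_def Q_def by auto
    have "(P * Q) $$ (i, j) = (\<Sum>l<r. (if i = l then 1 else 0) * (if l = j then d l else 0))"
      unfolding P_def Q_def using ij by (simp add: scalar_prod_def atLeast0LessThan)
    also have "\<dots> = (if i < r \<and> i = j then d i else 0)"
      by (simp add: if_distrib[of "\<lambda>x. x * _"] sum.delta cong: if_cong)
    finally show "diag_rect m n d $$ (i, j) = (P * Q) $$ (i, j)"
      unfolding diag_rect_def using ij zero by auto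
  qed (auto simp: P_def Q_def diag_rect_def)
qed

lemma det_zero_col:
  fixes A :: "'a::comm_ring_1 mat"
  assumes A: "A \<in> carrier_mat n n" and k: "k < n" and zero: "\<And>i. i < n \<Longrightarrow> A $$ (i, k) = 0"
  shows "det A = 0"
proof -
  have "(\<Prod>i = 0..<n. A $$ (i, p i)) = 0" if p: "p permutes {0..<n}" for p
  proof (rule prod_zero)
    have "k \<in> p ` {0..<n}"
      using permutes_image[OF p] k by simp
    then show "\<exists>i\<in>{0..<n}. A $$ (i, p i) = 0"
      using zero by force
  qed simp
  then show ?thesis
    unfolding det_def'[OF A] by simp
qed

lemma det_mult_inner_dim_less:
  fixes B :: "'a::comm_ring_1 mat"
  assumes B: "B \<in> carrier_mat r k" and C: "C \<in> carrier_mat k r" and k: "k < r"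
  shows "det (B * C) = 0"
proof -
  define B' where "B' = mat r r (\<lambda>(i, l). if l < k then B $$ (i, l) else 0)"
  define C' where "C' = mat r r (\<lambda>(l, j). if l < k then C $$ (l, j) else 0)"
  have B': "B' \<in> carrier_mat r r" and C': "C' \<in> carrier_mat r r"
    unfolding B'_def C'_def by auto
  have "B * C = B' * C'"
  proof (rule eq_matI)
    fix i j assume "i < dim_row (B' * C')" "j < dim_col (B' * C')"
    then have ij: "i < r" "j < r"
      using B' C' by auto
    have "(B' * C') $$ (i, j) =
        (\<Sum>l\<in>{0..<r}. (if l < k then B $$ (i, l) else 0) * (if l < k then C $$ (l, j) else 0))"
      unfolding B'_def C'_def using ij by (simp add: scalar_prod_def)
    also have "\<dots> = (\<Sum>l\<in>{0..<k}. B $$ (i, l) * C $$ (l, j))"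
      using k by (intro sum.mono_neutral_cong_right) auto
    finally show "(B * C) $$ (i, j) = (B' * C') $$ (i, j)"
      using B C ij by (simp add: scalar_prod_def)
  qed (use B C B' C' in auto)
  moreover have "det B' = 0"
    using k by (intro det_zero_col[OF B' k]) (simp add: B'_def)
  ultimately show ?thesis
    using det_mult[OF B' C'] by simp
qed

lemma det_cong_mod:
  fixes A B :: "int mat"
  assumes A: "A \<in> carrier_mat n n" and B: "B \<in> carrier_mat n n"
    and cong: "\<And>i j. i < n \<Longrightarrow> j < n \<Longrightarrow> A $$ (i, j) mod q = B $$ (i, j) mod q"
  shows "det A mod q = det B mod q"
proof -
  have term_cong: "signof p * (\<Prod>i = 0..<n. A $$ (i, p i)) mod q = signof p * (\<Prod>i = 0..<n. B $$ (i, p i)) mod q"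
    if p: "p permutes {0..<n}" for p
  proof -
    have "(\<Prod>i = 0..<n. A $$ (i, p i)) mod q = (\<Prod>i = 0..<n. A $$ (i, p i) mod q) mod q"
      by (simp only: mod_prod_eq)
    also have "\<dots> = (\<Prod>i = 0..<n. B $$ (i, p i) mod q) mod q"
      by (rule arg_cong[of _ _ "\<lambda>x. x mod q"], rule prod.cong) (use cong permutes_in_image[OF p] in auto)
    also have "\<dots> = (\<Prod>i = 0..<n. B $$ (i, p i)) mod q"
      by (simp only: mod_prod_eq)
    finally have "(\<Prod>i = 0..<n. A $$ (i, p i)) mod q = (\<Prod>i = 0..<n. B $$ (i, p i)) mod q" .
    then show ?thesis
      by (rule mod_mult_cong[OF refl])
  qed
  have "(\<Sum>p | p permutes {0..<n}. signof p * (\<Prod>i = 0..<n. A $$ (i, p i)) mod q) mod q =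
      (\<Sum>p | p permutes {0..<n}. signof p * (\<Prod>i = 0..<n. B $$ (i, p i)) mod q) mod q"
    by (rule arg_cong[of _ _ "\<lambda>x. x mod q"], rule sum.cong) (use term_cong in auto)
  then show ?thesis
    unfolding det_def'[OF A] det_def'[OF B] by (simp only: mod_sum_eq)
qed

lemma det_nonzero_if_cong_smult_one:
  fixes X :: "int mat" and D q :: int
  assumes X: "X \<in> carrier_mat r r" and D: "D > 0" and q: "q > 1"
    and cong: "\<And>i j. i < r \<Longrightarrow> j < r \<Longrightarrow> D * q dvd X $$ (i, j) - (if i = j then D else 0)"
  shows "det X \<noteq> 0"
proof
  assume det0: "det X = 0"
  define M where "M = mat r r (\<lambda>(i, j). (if i = j then 1 else 0)
      + q * ((X $$ (i, j) - (if i = j then D else 0)) div (D * q)))"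
  have M: "M \<in> carrier_mat r r"
    unfolding M_def by simp
  have "X = D \<cdot>\<^sub>m M"
  proof (rule eq_matI)
    fix i j assume "i < dim_row (D \<cdot>\<^sub>m M)" "j < dim_col (D \<cdot>\<^sub>m M)"
    then have ij: "i < r" "j < r"
      using M by auto
    show "X $$ (i, j) = (D \<cdot>\<^sub>m M) $$ (i, j)"
      using cong[OF ij] ij unfolding M_def by (auto simp: algebra_simps elim!: dvdE)
  qed (use X M in auto)
  then have "D ^ r * det M = 0"
    using det0 M by simp
  then have "det M = 0"
    using D by simp
  moreover have "det M mod q = det (1\<^sub>m r) mod q"
    by (rule det_cong_mod[OF M]) (auto simp: M_def)
  ultimately show False
    using q by simp
qed

lemma of_int_mod_ring_eq_0_iff: "(of_int x :: 'a::nontriv mod_ring) = 0 \<longleftrightarrow> int CARD('a) dvd x"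
  unfolding of_int_of_int_mod_ring by transfer auto

lemma map_mat_of_int_to_int_mod_ring: "map_mat of_int (map_mat to_int_mod_ring A) = A"
  by (rule eq_matI) (simp_all add: of_int_of_int_mod_ring)

lemma smult_one_mat_mod_ring_ne_mult:
  fixes B C :: "'a::nontriv mod_ring mat"
  assumes B: "B \<in> carrier_mat r k" and C: "C \<in> carrier_mat k r" and k: "k < r"
    and D: "D dvd CARD('a)" "D \<noteq> CARD('a)"
  shows "B * C \<noteq> of_nat D \<cdot>\<^sub>m 1\<^sub>m r"
proof
  assume BC: "B * C = of_nat D \<cdot>\<^sub>m 1\<^sub>m r"
  obtain q where h: "CARD('a) = D * q"
    using D(1) by (auto elim: dvdE)
  have "D * q > 0"
    using h nontriv[where 'a='a] by linarith
  then have "D > 0" "q \<noteq> 0"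
    by (simp_all add: nat_0_less_mult_iff)
  moreover have "q \<noteq> 1"
    using h D(2) by auto
  ultimately have "D > 0" "q > 1"
    by auto
  define B' where "B' = map_mat to_int_mod_ring B"
  define C' where "C' = map_mat to_int_mod_ring C"
  have B': "B' \<in> carrier_mat r k" and C': "C' \<in> carrier_mat k r"
    unfolding B'_def C'_def using B C by auto
  have "map_mat of_int (B' * C') = map_mat of_int B' * map_mat of_int C'"
    by (rule of_int_hom.mat_hom_mult[OF B' C'])
  also have "\<dots> = B * C"
    unfolding B'_def C'_def map_mat_of_int_to_int_mod_ring ..
  finally have lift: "map_mat of_int (B' * C') = B * C" .
  have "int D * int q dvd (B' * C') $$ (i, j) - (if i = j then int D else 0)"
    if ij: "i < r" "j < r" for i j
  proof -
    have "(of_int ((B' * C') $$ (i, j)) :: 'a mod_ring) = map_mat of_int (B' * C') $$ (i, j)"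
      using B' C' ij by simp
    also have "\<dots> = of_int (if i = j then int D else 0)"
      unfolding lift BC using ij by simp
    finally show ?thesis
      unfolding of_nat_mult[symmetric] h[symmetric] of_int_mod_ring_eq_0_iff[symmetric] by simp
  qed
  then have "det (B' * C') \<noteq> 0"
    using \<open>D > 0\<close> \<open>q > 1\<close> B' C' by (intro det_nonzero_if_cong_smult_one[of _ r "int D" "int q"]) auto
  then show False
    using det_mult_inner_dim_less[OF B' C' k] by simp
qed

lemma inner_rank_diag_rect_ge:
  fixes d :: "nat \<Rightarrow> nat"
  assumes r: "r \<le> m" "r \<le> n"
    and dvd_D: "\<And>i. i < r \<Longrightarrow> d i dvd D" and D: "D dvd CARD('a)" "D \<noteq> CARD('a)"
  shows "r \<le> inner_rank (diag_rect m n (\<lambda>i. of_nat (d i) :: 'a::nontriv mod_ring))"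
    (is "r \<le> inner_rank ?D")
proof (rule ccontr)
  assume "\<not> r \<le> inner_rank ?D"
  then have k: "inner_rank ?D < r"
    by simp
  have dims: "dim_row ?D = m" "dim_col ?D = n"
    by (simp_all add: diag_rect_def)
  obtain B C where B: "B \<in> carrier_mat m (inner_rank ?D)" and C: "C \<in> carrier_mat (inner_rank ?D) n"
    and BC: "?D = B * C"
    by (rule inner_rank_factorization[of ?D, unfolded dims])
  define B' where "B' = mat r (inner_rank ?D) (\<lambda>(i, l). of_nat (D div d i) * B $$ (i, l))"
  define C' where "C' = mat (inner_rank ?D) r (\<lambda>(l, j). C $$ (l, j))"
  have "B' * C' = of_nat D \<cdot>\<^sub>m 1\<^sub>m r"
  proof (rule eq_matI)
    fix i j assume "i < dim_row (of_nat D \<cdot>\<^sub>m 1\<^sub>m r)" "j < dim_col (of_nat D \<cdot>\<^sub>m 1\<^sub>m r)"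
    then have ij: "i < r" "j < r"
      by auto
    have "(B' * C') $$ (i, j) = of_nat (D div d i) * (B * C) $$ (i, j)"
      using B C ij r
      by (simp add: B'_def C'_def scalar_prod_def sum_distrib_left mult.assoc)
    also have "\<dots> = (if i = j then of_nat (D div d i * d i) else 0)"
      unfolding BC[symmetric] using ij r by (simp add: diag_rect_def)
    also have "\<dots> = (of_nat D \<cdot>\<^sub>m 1\<^sub>m r) $$ (i, j)"
      using dvd_D[OF ij(1)] ij by (auto simp flip: of_nat_mult)
    finally show "(B' * C') $$ (i, j) = (of_nat D \<cdot>\<^sub>m 1\<^sub>m r) $$ (i, j)" .
  qed (auto simp: B'_def C'_def)
  moreover have "B' \<in> carrier_mat r (inner_rank ?D)" "C' \<in> carrier_mat (inner_rank ?D) r"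
    unfolding B'_def C'_def by auto
  ultimately show False
    using smult_one_mat_mod_ring_ne_mult[OF _ _ k D] by blast
qed

lemma inner_rank_diag_divisor_chain:
  fixes d :: "nat \<Rightarrow> nat" and S T :: "'a::nontriv mod_ring mat"
  assumes S: "S \<in> carrier_mat m m" "invertible_mat S"
    and T: "T \<in> carrier_mat n n" "invertible_mat T" and mn: "m \<le> n"
    and dvd_Suc: "\<And>c. c \<in> {1..<m} \<Longrightarrow> d c dvd d (Suc c)"
    and dvd_card: "\<And>c. c \<in> {1..m} \<Longrightarrow> d c dvd CARD('a)"
  shows "inner_rank (S * diag_rect m n (\<lambda>k. of_nat (d (Suc k))) * T) =
    Max ({0} \<union> {c\<in>{1..m}. d c \<noteq> CARD('a)})"
proof -
  define R where "R = {c\<in>{1..m}. d c \<noteq> CARD('a)}"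
  define r where "r = Max ({0} \<union> R)"
  have R: "finite R" "R \<subseteq> {1..m}"
    unfolding R_def by auto
  have chain: "d c dvd d c'" if "1 \<le> c" "c \<le> c'" "c' \<le> m" for c c'
    using \<open>c \<le> c'\<close>
  proof (induction c' rule: dec_induct)
    case (step k)
    with that show ?case
      using dvd_Suc[of k] dvd_trans by auto
  qed simp
  have rank_eq: "inner_rank (S * diag_rect m n (\<lambda>k. of_nat (d (Suc k))) * T) =
      inner_rank (diag_rect m n (\<lambda>k. of_nat (d (Suc k)) :: 'a mod_ring))"
    by (rule inner_rank_invertible_mult[OF S T]) (simp add: diag_rect_def)
  have "inner_rank (diag_rect m n (\<lambda>k. of_nat (d (Suc k)) :: 'a mod_ring)) \<le> r"
  proof (rule inner_rank_diag_rect_le)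
    fix i assume "r \<le> i" "i < m"
    then have "Suc i \<notin> R"
      using Max_ge[of "{0} \<union> R" "Suc i"] R unfolding r_def by auto
    with \<open>i < m\<close> show "(of_nat (d (Suc i)) :: 'a mod_ring) = 0"
      unfolding R_def by simp
  qed
  moreover have "r \<le> inner_rank (diag_rect m n (\<lambda>k. of_nat (d (Suc k)) :: 'a mod_ring))"
  proof (cases "r = 0")
    case False
    then have "r \<in> R"
      using Max_in[of "{0} \<union> R"] R unfolding r_def by auto
    then show ?thesis
      using R mn unfolding R_def
      by (intro inner_rank_diag_rect_ge[where D = "d r"] chain dvd_card) auto
  qed simp
  ultimately show ?thesis
    unfolding rank_eq r_def R_def by (rule antisym)
qed

lemma prod_power_eq_prod_power_iff:
  fixes p :: "'i \<Rightarrow> nat"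
  assumes I: "finite I" and p: "\<And>i. i \<in> I \<Longrightarrow> p i > 1" and le: "\<And>i. i \<in> I \<Longrightarrow> a i \<le> b i"
  shows "(\<Prod>i\<in>I. p i ^ a i) = (\<Prod>i\<in>I. p i ^ b i) \<longleftrightarrow> (\<forall>i\<in>I. a i = b i)"
proof -
  have "(\<Prod>i\<in>I. p i ^ b i) = (\<Prod>i\<in>I. p i ^ a i * p i ^ (b i - a i))"
    using le by (intro prod.cong refl) (simp flip: power_add)
  also have "\<dots> = (\<Prod>i\<in>I. p i ^ a i) * (\<Prod>i\<in>I. p i ^ (b i - a i))"
    by (rule prod.distrib)
  finally have split: "(\<Prod>i\<in>I. p i ^ b i) = (\<Prod>i\<in>I. p i ^ a i) * (\<Prod>i\<in>I. p i ^ (b i - a i))" .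
  have "(\<Prod>i\<in>I. p i ^ a i) > 0"
    using p by (intro prod_pos zero_less_power) fastforce
  then have "(\<Prod>i\<in>I. p i ^ a i) = (\<Prod>i\<in>I. p i ^ b i) \<longleftrightarrow> (\<Prod>i\<in>I. p i ^ (b i - a i)) = 1"
    unfolding split by auto
  also have "\<dots> \<longleftrightarrow> (\<forall>i\<in>I. p i ^ (b i - a i) = 1)"
    by (rule prod_eq_1_iff[OF I])
  also have "\<dots> \<longleftrightarrow> (\<forall>i\<in>I. a i = b i)"
    using p le by (fastforce simp: power_eq_1_iff)
  finally show ?thesis .
qed

theorem lemma2p11:
  fixes t m n :: nat
    and p s :: "nat \<Rightarrow> nat"
    and \<alpha> :: "nat \<Rightarrow> nat \<Rightarrow> nat"
    and S T A :: "'h::nontriv mod_ring mat"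
  assumes h_fact: "CARD('h) = (\<Prod>i\<in>{1..t}. p i ^ s i)"
    and primes: "\<forall>i\<in>{1..t}. prime (p i)"
    and distinct: "inj_on p {1..t}"
    and s_pos: "\<forall>i\<in>{1..t}. s i \<ge> 1"
    and mn: "m \<le> n"
    and S: "S \<in> carrier_mat m m" "invertible_mat S"
    and T: "T \<in> carrier_mat n n" "invertible_mat T"
    and mono: "\<forall>i\<in>{1..t}. \<forall>c\<in>{1..<m}. \<alpha> i c \<le> \<alpha> i (Suc c)"
    and bound: "\<forall>i\<in>{1..t}. \<forall>c\<in>{1..m}. \<alpha> i c \<le> s i"
    and A: "A = S * diag_rect m n (\<lambda>k. of_nat (\<Prod>i\<in>{1..t}. p i ^ \<alpha> i (Suc k))) * T"
  shows "inner_rank A = Max ({0} \<union> {c\<in>{1..m}. (\<exists>i\<in>{1..t}. \<alpha> i c \<noteq> s i)})"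
proof -
  define d where "d c = (\<Prod>i\<in>{1..t}. p i ^ \<alpha> i c)" for c
  have "d c = CARD('h) \<longleftrightarrow> (\<forall>i\<in>{1..t}. \<alpha> i c = s i)" if "c \<in> {1..m}" for c
    unfolding d_def h_fact
    by (rule prod_power_eq_prod_power_iff) (use that bound primes prime_gt_1_nat in auto)
  then have "{c\<in>{1..m}. \<exists>i\<in>{1..t}. \<alpha> i c \<noteq> s i} = {c\<in>{1..m}. d c \<noteq> CARD('h)}"
    by auto
  moreover have "inner_rank A = Max ({0} \<union> {c\<in>{1..m}. d c \<noteq> CARD('h)})"
    unfolding A d_def[symmetric]
  proof (rule inner_rank_diag_divisor_chain[OF S T mn])
    show "d c dvd d (Suc c)" if "c \<in> {1..<m}" for c
      using that mono unfolding d_def by (auto intro!: prod_dvd_prod le_imp_power_dvd)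
    show "d c dvd CARD('h)" if "c \<in> {1..m}" for c
      using that bound unfolding d_def h_fact by (auto intro!: prod_dvd_prod le_imp_power_dvd)
  qed
  ultimately show ?thesis
    by simp
qed

end
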